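(* Let $A$ be a dga with a positive weight decomposition. If $H^*(A)$ is finite dimensional, then there are a rational number $\alpha>0$ and an integer $k\ge0$ such that $A$ is $(\alpha,k)$-segmented.
   Context: A weight decomposition of a non-negatively graded dga $A$ is a splitting $A^n=\bigoplus_pA^n_p$ with $dA^n_p\subseteq A^{n+1}_p$ and $A^n_pA^m_q\subseteq A^{n+m}_{p+q}$; it is positive if $A^0$ has weight $0$ and $A^i$ has positive weights for $i\ne0$. $A$ is $(\alpha,k)$-segmented if $H^n(A)_p:=H^n(A_p)$ is non-trivial only when $\alpha n\le p\le\alpha(n+k)$. *)

theory Defs
  imports Complex_Main
begin

text \<open>A dga over a field 'k is modelled by its total space, a type 'a with an
associative unital multiplication (ring_1), a 'k-vector space structure scale
for which the multiplication is bilinear, and a differential d.  The bigrading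
(cohomological degree n, weight p) is a family of subspaces V (n,p) = A^n_p whose
direct sum is the whole algebra; A^n is the direct sum of the V (n,p) over p.\<close>

definition direct_sum_decomp ::
  "('k::field \<Rightarrow> 'a::ab_group_add \<Rightarrow> 'a) \<Rightarrow> ('i \<Rightarrow> 'a set) \<Rightarrow> bool" where
  "direct_sum_decomp scale V \<longleftrightarrow>
     (\<forall>i. module.subspace scale (V i)) \<and>
     (\<forall>x. \<exists>S f. finite S \<and> (\<forall>i\<in>S. f i \<in> V i) \<and> x = sum f S) \<and>
     (\<forall>S f. finite S \<longrightarrow> (\<forall>i\<in>S. f i \<in> V i) \<longrightarrow> sum f S = 0 \<longrightarrow> (\<forall>i\<in>S. f i = 0))"

definition weighted_dga ::
  "('k::field \<Rightarrow> 'a::ring_1 \<Rightarrow> 'a) \<Rightarrow> ('a \<Rightarrow> 'a) \<Rightarrow> (nat \<times> int \<Rightarrow> 'a set) \<Rightarrow> bool" where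
  "weighted_dga scale d V \<longleftrightarrow>
     vector_space scale \<and>
     (\<forall>c x y. scale c (x * y) = scale c x * y \<and> scale c (x * y) = x * scale c y) \<and>
     direct_sum_decomp scale V \<and>
     (\<exists>p. 1 \<in> V (0, p)) \<and>
     (\<forall>n m p q x y. x \<in> V (n, p) \<longrightarrow> y \<in> V (m, q) \<longrightarrow> x * y \<in> V (n + m, p + q)) \<and>
     Vector_Spaces.linear scale scale d \<and>
     (\<forall>x. d (d x) = 0) \<and>
     (\<forall>n p x. x \<in> V (n, p) \<longrightarrow> d x \<in> V (Suc n, p)) \<and>
     (\<forall>n p x y. x \<in> V (n, p) \<longrightarrow> d (x * y) = d x * y + (-1) ^ n * x * d y)"

definition positive_weights :: "(nat \<times> int \<Rightarrow> 'a::zero set) \<Rightarrow> bool" where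
  "positive_weights V \<longleftrightarrow>
     (\<forall>p. p \<noteq> 0 \<longrightarrow> V (0, p) = {0}) \<and>
     (\<forall>n p. n \<noteq> 0 \<longrightarrow> p \<le> 0 \<longrightarrow> V (n, p) = {0})"

text \<open>H^n(A)_p = H^n(A_p) is non-trivial: some cocycle of degree n and weight p is
not a coboundary d(A^(n-1)_p) (where A^(-1) = 0).\<close>

definition coh_nontrivial ::
  "('a::ab_group_add \<Rightarrow> 'a) \<Rightarrow> (nat \<times> int \<Rightarrow> 'a set) \<Rightarrow> nat \<Rightarrow> int \<Rightarrow> bool" where
  "coh_nontrivial d V n p \<longleftrightarrow>
     (\<exists>z\<in>V (n, p). d z = 0 \<and> z \<notin> (if n = 0 then {0} else d ` V (n - 1, p)))"

text \<open>H^*(A) = ker d / im d is finite dimensional: it is spanned by the classes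
of finitely many cocycles.\<close>

definition finite_dim_cohomology ::
  "('k::field \<Rightarrow> 'a::ab_group_add \<Rightarrow> 'a) \<Rightarrow> ('a \<Rightarrow> 'a) \<Rightarrow> bool" where
  "finite_dim_cohomology scale d \<longleftrightarrow>
     (\<exists>F. finite F \<and> (\<forall>z\<in>F. d z = 0) \<and>
        (\<forall>z. d z = 0 \<longrightarrow> (\<exists>u\<in>module.span scale F. \<exists>b. z = u + d b)))"

definition segmented ::
  "('a::ab_group_add \<Rightarrow> 'a) \<Rightarrow> (nat \<times> int \<Rightarrow> 'a set) \<Rightarrow> rat \<Rightarrow> int \<Rightarrow> bool" where
  "segmented d V \<alpha> k \<longleftrightarrow>
     (\<forall>n p. coh_nontrivial d V n p \<longrightarrow>
        \<alpha> * of_nat n \<le> of_int p \<and> of_int p \<le> \<alpha> * (of_nat n + of_int k))"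

end

theory Submission
  imports Defs
begin

text \<open>
  \<open>H\<^sup>*(A)\<close> is spanned by the classes of finitely many cocycles, and each of them has only
  finitely many nonzero components in the summands \<open>A\<^sup>n\<^sub>p\<close>. The projections onto the summands
  commute with \<open>d\<close>, so a nonzero class in \<open>H\<^sup>n(A)\<^sub>p\<close> forces some generator to have a
  nonzero \<open>(n, p)\<close>-component: only finitely many bidegrees carry cohomology. By positivity
  they have \<open>p = 0\<close> if \<open>n = 0\<close> and \<open>p \<ge> 1\<close> otherwise, so with \<open>N\<close> bounding their degrees
  and \<open>P\<close> their weights, \<open>\<alpha> = 1/N\<close> and \<open>k = N P\<close> do the job.
\<close>

lemma sum_extend_by_zero:
  fixes f :: "'i \<Rightarrow> 'a::comm_monoid_add"
  assumes "finite T" "S \<subseteq> T"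
  shows "(\<Sum>j\<in>T. if j \<in> S then f j else 0) = sum f S"
  using sum.inter_restrict[OF assms(1), of f S] assms(2) by (simp add: Int_absorb1)

locale direct_sum_decomposition = module scale
  for scale :: "'k::field \<Rightarrow> 'a::ab_group_add \<Rightarrow> 'a" +
  fixes V :: "'i \<Rightarrow> 'a set"
  assumes decomposition: "direct_sum_decomp scale V"
begin

lemma subspace_summand: "subspace (V i)"
  using decomposition by (simp add: direct_sum_decomp_def)

lemma zero_in_summand: "0 \<in> V i"
  using subspace_0[OF subspace_summand] .

lemma decomposition_exists: "\<exists>S f. finite S \<and> (\<forall>j\<in>S. f j \<in> V j) \<and> x = sum f S"
  using decomposition by (simp add: direct_sum_decomp_def)

lemma decomposition_unique:
  assumes S: "finite S" "\<forall>j\<in>S. f j \<in> V j"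
    and T: "finite T" "\<forall>j\<in>T. g j \<in> V j"
    and eq: "sum f S = sum g T"
  shows "(if i \<in> S then f i else 0) = (if i \<in> T then g i else 0)"
proof -
  define h where "h j = (if j \<in> S then f j else 0) - (if j \<in> T then g j else 0)" for j
  have "h j \<in> V j" for j
    unfolding h_def using S T zero_in_summand by (intro subspace_diff[OF subspace_summand]) auto
  moreover have "sum h (S \<union> T) = 0"
    using S(1) T(1) eq by (simp add: h_def sum_subtractf sum_extend_by_zero)
  moreover have "finite (S \<union> T)" using S(1) T(1) by simp
  ultimately have "\<forall>j \<in> S \<union> T. h j = 0"
    using decomposition unfolding direct_sum_decomp_def by blast
  then show ?thesis by (cases "i \<in> S \<union> T") (auto simp: h_def)
qed

definition component :: "'i \<Rightarrow> 'a \<Rightarrow> 'a" where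
  "component i x = (THE v. \<exists>S f. finite S \<and> (\<forall>j\<in>S. f j \<in> V j) \<and> x = sum f S \<and>
      v = (if i \<in> S then f i else 0))"

lemma component_eq:
  assumes "finite S" "\<forall>j\<in>S. f j \<in> V j" "x = sum f S"
  shows "component i x = (if i \<in> S then f i else 0)"
  unfolding component_def
proof (rule the_equality)
  fix v
  assume "\<exists>T g. finite T \<and> (\<forall>j\<in>T. g j \<in> V j) \<and> x = sum g T \<and> v = (if i \<in> T then g i else 0)"
  then obtain T g where "finite T" "\<forall>j\<in>T. g j \<in> V j" "x = sum g T"
    and "v = (if i \<in> T then g i else 0)" by blast
  then show "v = (if i \<in> S then f i else 0)"
    using decomposition_unique[OF assms(1,2), of T g i] assms(3) by simp
qed (use assms in blast)

lemma component_in_summand: "component i x \<in> V i"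
proof -
  obtain S f where "finite S" "\<forall>j\<in>S. f j \<in> V j" "x = sum f S"
    using decomposition_exists by blast
  then show ?thesis using component_eq[of S f x i] zero_in_summand by simp
qed

lemma component_summand: "x \<in> V i \<Longrightarrow> component i x = x"
  using component_eq[of "{i}" "\<lambda>_. x" x i] by simp

lemma finite_component_support: "finite {i. component i x \<noteq> 0}"
proof -
  obtain S f where S: "finite S" "\<forall>j\<in>S. f j \<in> V j" "x = sum f S"
    using decomposition_exists by blast
  then have "{i. component i x \<noteq> 0} \<subseteq> S" using component_eq by auto
  then show ?thesis using S(1) finite_subset by blast
qed

lemma component_add: "component i (x + y) = component i x + component i y"
proof -
  obtain S f where S: "finite S" "\<forall>j\<in>S. f j \<in> V j" "x = sum f S"
    using decomposition_exists by blast
  obtain T g where T: "finite T" "\<forall>j\<in>T. g j \<in> V j" "y = sum g T"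
    using decomposition_exists by blast
  define h where "h j = (if j \<in> S then f j else 0) + (if j \<in> T then g j else 0)" for j
  have "\<forall>j\<in>S \<union> T. h j \<in> V j"
    unfolding h_def using S(2) T(2) zero_in_summand
    by (auto intro!: subspace_add[OF subspace_summand])
  moreover have "x + y = sum h (S \<union> T)"
    unfolding S(3) T(3) h_def sum.distrib
    using S(1) T(1) by (simp add: sum_extend_by_zero)
  ultimately have "component i (x + y) = (if i \<in> S \<union> T then h i else 0)"
    using S(1) T(1) component_eq[of "S \<union> T" h] by blast
  also have "\<dots> = component i x + component i y"
    unfolding component_eq[OF S, of i] component_eq[OF T, of i] h_def by simp
  finally show ?thesis .
qed

lemma component_scale: "component i (scale c x) = scale c (component i x)"
proof -
  obtain S f where S: "finite S" "\<forall>j\<in>S. f j \<in> V j" "x = sum f S"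
    using decomposition_exists by blast
  then have "component i (scale c x) = (if i \<in> S then scale c (f i) else 0)"
    by (intro component_eq) (auto simp: scale_sum_right subspace_scale[OF subspace_summand])
  then show ?thesis using component_eq[OF S, of i] by simp
qed

lemma module_hom_component: "module_hom scale scale (component i)"
  using module_axioms component_add component_scale by (simp add: module_hom_iff)

lemma component_linear_image:
  assumes f: "module_hom scale scale f" and "inj \<sigma>" and shift: "\<And>i. f ` V i \<subseteq> V (\<sigma> i)"
  shows "component j (f x) = (if j \<in> range \<sigma> then f (component (inv \<sigma> j) x) else 0)"
proof -
  obtain S g where S: "finite S" "\<forall>j\<in>S. g j \<in> V j" "x = sum g S"
    using decomposition_exists by blast
  define h where "h = f \<circ> g \<circ> inv \<sigma>"
  have "f x = sum (h \<circ> \<sigma>) S"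
    unfolding S(3) module_hom.sum[OF f] h_def using \<open>inj \<sigma>\<close> by simp
  also have "\<dots> = sum h (\<sigma> ` S)"
    using sum.reindex[OF inj_on_subset[OF \<open>inj \<sigma>\<close> subset_UNIV]] by metis
  finally have "f x = sum h (\<sigma> ` S)" .
  moreover have "h (\<sigma> i) \<in> V (\<sigma> i)" if "i \<in> S" for i
    using S(2) shift[of i] that \<open>inj \<sigma>\<close> by (auto simp: h_def)
  ultimately have image: "component j (f x) = (if j \<in> \<sigma> ` S then h j else 0)"
    using S(1) by (intro component_eq) auto
  show ?thesis
  proof (cases "j \<in> range \<sigma>")
    case True
    then obtain i where j: "j = \<sigma> i" by blast
    have "\<sigma> i \<in> \<sigma> ` S \<longleftrightarrow> i \<in> S"
      using \<open>inj \<sigma>\<close> by (rule inj_image_mem_iff)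
    then show ?thesis
      unfolding j image[unfolded j] using \<open>inj \<sigma>\<close> module_hom.zero[OF f]
      by (simp add: h_def component_eq[OF S])
  next
    case False
    then show ?thesis unfolding image by auto
  qed
qed

end

locale bigraded_cochain_complex = direct_sum_decomposition scale V
  for scale :: "'k::field \<Rightarrow> 'a::ab_group_add \<Rightarrow> 'a" and V :: "nat \<times> int \<Rightarrow> 'a set" +
  fixes d :: "'a \<Rightarrow> 'a"
  assumes module_hom_d: "module_hom scale scale d"
    and d_summand: "\<And>n p. d ` V (n, p) \<subseteq> V (Suc n, p)"
begin

lemma component_d: "component (n, p) (d x) = (if n = 0 then 0 else d (component (n - 1, p) x))"
proof -
  define \<sigma> :: "nat \<times> int \<Rightarrow> nat \<times> int" where "\<sigma> = (\<lambda>(m, q). (Suc m, q))"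
  have "inj \<sigma>" by (auto simp: \<sigma>_def inj_def)
  have "(n, p) \<in> range \<sigma> \<longleftrightarrow> n \<noteq> 0"
    by (cases n) (auto simp: \<sigma>_def image_iff)
  moreover have "inv \<sigma> (n, p) = (n - 1, p)" if "n \<noteq> 0"
    using that inv_f_f[OF \<open>inj \<sigma>\<close>, of "(n - 1, p)"] by (simp add: \<sigma>_def)
  moreover have "\<And>i. d ` V i \<subseteq> V (\<sigma> i)"
    using d_summand by (auto simp: \<sigma>_def)
  ultimately show ?thesis
    using component_linear_image[OF module_hom_d \<open>inj \<sigma>\<close>, of "(n, p)" x] by simp
qed

lemma coh_nontrivial_summand_nonzero:
  assumes "coh_nontrivial d V n p"
  shows "V (n, p) \<noteq> {0}"
proof
  assume "V (n, p) = {0}"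
  moreover have "0 \<in> d ` V (n - 1, p)"
    using zero_in_summand module_hom.zero[OF module_hom_d] by (metis image_eqI)
  ultimately show False using assms by (auto simp: coh_nontrivial_def split: if_splits)
qed

lemma coh_nontrivial_component_nonzero:
  assumes F: "\<forall>z. d z = 0 \<longrightarrow> (\<exists>u\<in>span F. \<exists>b. z = u + d b)"
    and "coh_nontrivial d V n p"
  shows "\<exists>z\<in>F. component (n, p) z \<noteq> 0"
proof (rule ccontr)
  assume "\<not> (\<exists>z\<in>F. component (n, p) z \<noteq> 0)"
  then have F0: "component (n, p) u = 0" if "u \<in> span F" for u
    using module_hom.eq_0_on_span[OF module_hom_component, where b = F and x = u] that by blast
  obtain z where z: "z \<in> V (n, p)" "d z = 0" "z \<notin> (if n = 0 then {0} else d ` V (n - 1, p))"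
    using \<open>coh_nontrivial d V n p\<close> unfolding coh_nontrivial_def by blast
  obtain u b where "u \<in> span F" "z = u + d b" using F z(2) by blast
  then have "z = component (n, p) (d b)"
    using component_summand[OF z(1)] component_add F0 by simp
  then show False
    using z(3) component_d component_in_summand by (auto split: if_splits)
qed

lemma finite_nontrivial_cohomology:
  assumes "finite_dim_cohomology scale d"
  shows "finite {(n, p). coh_nontrivial d V n p}"
proof -
  obtain F where "finite F" and F: "\<forall>z. d z = 0 \<longrightarrow> (\<exists>u\<in>span F. \<exists>b. z = u + d b)"
    using assms unfolding finite_dim_cohomology_def by blast
  have "{(n, p). coh_nontrivial d V n p} \<subseteq> (\<Union>z\<in>F. {i. component i z \<noteq> 0})"
    using coh_nontrivial_component_nonzero[OF F] by blast
  moreover have "finite (\<Union>z\<in>F. {i. component i z \<noteq> 0})"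
    using \<open>finite F\<close> finite_component_support by blast
  ultimately show ?thesis by (rule finite_subset)
qed

end

lemma positive_weights_nonzero_summand:
  assumes "positive_weights V" and "V (n, p) \<noteq> {0}"
  shows "if n = 0 then p = 0 else 0 < p"
  using assms unfolding positive_weights_def by (cases "n = 0") (auto simp: not_less)

lemma ex_segment_bounds:
  fixes B :: "(nat \<times> int) set"
  assumes "finite B" and weights: "\<And>n p. (n, p) \<in> B \<Longrightarrow> (if n = 0 then p = 0 else 0 < p)"
  shows "\<exists>\<alpha>::rat. \<alpha> > 0 \<and> (\<exists>k::int. k \<ge> 0 \<and>
           (\<forall>(n, p) \<in> B. \<alpha> * of_nat n \<le> of_int p \<and> of_int p \<le> \<alpha> * (of_nat n + of_int k)))"
proof -
  obtain M where M: "\<And>n. n \<in> fst ` B \<Longrightarrow> n \<le> M"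
    using bdd_above_finite[of "fst ` B"] \<open>finite B\<close> by (auto simp: bdd_above_def)
  obtain Q where Q: "\<And>p. p \<in> snd ` B \<Longrightarrow> p \<le> Q"
    using bdd_above_finite[of "snd ` B"] \<open>finite B\<close> by (auto simp: bdd_above_def)
  define N where "N = Suc M"
  define P where "P = max 0 Q"
  define \<alpha> :: rat where "\<alpha> = 1 / of_nat N"
  have "\<alpha> * of_nat n \<le> of_int p \<and> of_int p \<le> \<alpha> * (of_nat n + of_int (int N * P))"
    if "(n, p) \<in> B" for n p
  proof -
    have "n \<le> N" "p \<le> P" using M Q that unfolding N_def P_def by force+
    then have "\<alpha> * of_nat n \<le> 1" "of_int p \<le> \<alpha> * of_int (int N * P)"
      by (simp_all add: \<alpha>_def N_def)
    moreover have "0 \<le> \<alpha> * of_nat n" by (simp add: \<alpha>_def)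
    ultimately show ?thesis using weights[OF that]
      by (auto simp: algebra_simps split: if_splits)
  qed
  moreover have "\<alpha> > 0" "int N * P \<ge> 0" by (simp_all add: \<alpha>_def N_def P_def)
  ultimately show ?thesis by blast
qed

theorem proposition3p13:
  fixes scale :: "'k::field_char_0 \<Rightarrow> 'a::ring_1 \<Rightarrow> 'a"
    and d :: "'a \<Rightarrow> 'a"
    and V :: "nat \<times> int \<Rightarrow> 'a set"
  assumes "weighted_dga scale d V"
    and "positive_weights V"
    and "finite_dim_cohomology scale d"
  shows "\<exists>\<alpha>::rat. \<alpha> > 0 \<and> (\<exists>k::int. k \<ge> 0 \<and> segmented d V \<alpha> k)"
proof -
  have "bigraded_cochain_complex scale V d"
    using assms(1)
    unfolding weighted_dga_def bigraded_cochain_complex_def bigraded_cochain_complex_axioms_def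
      direct_sum_decomposition_def direct_sum_decomposition_axioms_def
    by (auto simp: module_iff_vector_space module_hom_iff_linear)
  then interpret bigraded_cochain_complex scale V d .
  have weights: "if n = 0 then p = 0 else 0 < p" if "coh_nontrivial d V n p" for n p
    using positive_weights_nonzero_summand[OF assms(2) coh_nontrivial_summand_nonzero[OF that]] .
  have "\<exists>\<alpha>::rat. \<alpha> > 0 \<and> (\<exists>k::int. k \<ge> 0 \<and> (\<forall>(n, p) \<in> {(n, p). coh_nontrivial d V n p}.
      \<alpha> * of_nat n \<le> of_int p \<and> of_int p \<le> \<alpha> * (of_nat n + of_int k)))"
    by (rule ex_segment_bounds[OF finite_nontrivial_cohomology[OF assms(3)]]) (simp add: weights)
  then show ?thesis unfolding segmented_def by fast
qed

end
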